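(* Let $(G,r,k,c,\pi)$ be an instance of $k$-PCST with optimal value $\mathrm{OPT}$, and run the algorithm $\mathcal{A}$ described below on it. If $\mathcal{A}$ terminates at Step 1, then its output $F_{\mathrm{OUT}}=(V_{\mathrm{OUT}},E_{\mathrm{OUT}})$ is a feasible solution of the $k$-PCST instance and satisfies \[ \sum_{e\in E_{\mathrm{OUT}}}c(e)+\sum_{v\notin V_{\mathrm{OUT}}}\pi(v)\le 2\,\mathrm{OPT}. \]
   Context: An instance of $k$-PCST consists of an undirected connected graph $G=(V,E)$, a root $r\in V$, an integer $k$, a nonnegative edge cost $c:E\to\mathbb{R}_+$ and a nonnegative penalty $\pi:V\to\mathbb{R}_+$. A feasible solution is a subtree $F=(V_F,E_F)$ of $G$ with $r\in V_F$ and $|V_F|\ge k$, of cost $\sum_{e\in E_F}c(e)+\sum_{v\in V\setminus V_F}\pi(v)$; $\mathrm{OPT}$ is the minimum cost. The PCST instance $(G,r,c,\pi)$ is the same problem without the constraint $|V_F|\ge k$; the rooted $k$-MST instance $(G,r,k,c)$ asks for a subtree containing $r$ with at least $k$ vertices minimizing total edge cost. Procedure 1 is the Goemans–Williamson primal-dual algorithm for PCST, which returns a subtree $F=(V_F,E_F)$ containing $r$ whose PCST cost is at most $2$ times the optimal PCST value. Procedure 2 is Garg's primal-dual algorithm for rooted $k$-MST, which returns a subtree containing $r$ with at least $k$ vertices whose edge cost is at most $2$ times the optimal rooted $k$-MST value. Algorithm $\mathcal{A}$: Step 1: apply Procedure 1 to $(G,r,c,\pi)$ obtaining $F_{\mathrm{PCST}}=(V_{\mathrm{PCST}},E_{\mathrm{PCST}})$;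 if $|V_{\mathrm{PCST}}|\ge k$, return $F_{\mathrm{PCST}}$ (termination at Step 1); otherwise go to Step 2. Step 2: apply Procedure 2 to $(G,r,k,c)$ obtaining $F_{k\text{-MST}}=(V_{k\text{-MST}},E_{k\text{-MST}})$. Step 3: form the graph $G'=(V_{\mathrm{PCST}}\cup V_{k\text{-MST}},E_{\mathrm{PCST}}\cup E_{k\text{-MST}})$, compute a minimum spanning tree $F_{\mathrm{OUT}}$ of $G'$ with respect to $c$, and return it. *)

theory Defs
  imports Complex_Main
begin

definition graph :: "'a set \<Rightarrow> 'a set set \<Rightarrow> bool" where
  "graph V E \<longleftrightarrow> finite V \<and> (\<forall>e\<in>E. \<exists>u v. e = {u, v} \<and> u \<noteq> v \<and> u \<in> V \<and> v \<in> V)"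

definition adj :: "'a set set \<Rightarrow> ('a \<times> 'a) set" where
  "adj E = {(u, v). {u, v} \<in> E}"

definition connected_graph :: "'a set \<Rightarrow> 'a set set \<Rightarrow> bool" where
  "connected_graph V E \<longleftrightarrow> (\<forall>u\<in>V. \<forall>v\<in>V. (u, v) \<in> (adj E)\<^sup>*)"

text \<open>Acyclic: every edge is a bridge, i.e. no cycle passes through any edge.\<close>
definition acyclic_graph :: "'a set set \<Rightarrow> bool" where
  "acyclic_graph E \<longleftrightarrow> (\<forall>e\<in>E. \<forall>u v. e = {u, v} \<longrightarrow> (u, v) \<notin> (adj (E - {e}))\<^sup>*)"

definition is_tree :: "'a set \<Rightarrow> 'a set set \<Rightarrow> bool" where
  "is_tree VF EF \<longleftrightarrow> VF \<noteq> {} \<and> graph VF EF \<and> connected_graph VF EF \<and> acyclic_graph EF"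

definition subtree :: "'a set \<Rightarrow> 'a set set \<Rightarrow> 'a set \<Rightarrow> 'a set set \<Rightarrow> bool" where
  "subtree V E VF EF \<longleftrightarrow> VF \<subseteq> V \<and> EF \<subseteq> E \<and> is_tree VF EF"

definition pcst_cost :: "'a set \<Rightarrow> ('a set \<Rightarrow> real) \<Rightarrow> ('a \<Rightarrow> real) \<Rightarrow> 'a set \<Rightarrow> 'a set set \<Rightarrow> real" where
  "pcst_cost V c \<pi> VF EF = (\<Sum>e\<in>EF. c e) + (\<Sum>v\<in>V - VF. \<pi> v)"

definition pcst_feasible :: "'a set \<Rightarrow> 'a set set \<Rightarrow> 'a \<Rightarrow> 'a set \<Rightarrow> 'a set set \<Rightarrow> bool" where
  "pcst_feasible V E r VF EF \<longleftrightarrow> subtree V E VF EF \<and> r \<in> VF"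

definition kpcst_feasible :: "'a set \<Rightarrow> 'a set set \<Rightarrow> 'a \<Rightarrow> nat \<Rightarrow> 'a set \<Rightarrow> 'a set set \<Rightarrow> bool" where
  "kpcst_feasible V E r k VF EF \<longleftrightarrow> subtree V E VF EF \<and> r \<in> VF \<and> card VF \<ge> k"

definition pcst_opt :: "'a set \<Rightarrow> 'a set set \<Rightarrow> 'a \<Rightarrow> ('a set \<Rightarrow> real) \<Rightarrow> ('a \<Rightarrow> real) \<Rightarrow> real" where
  "pcst_opt V E r c \<pi> = Inf {pcst_cost V c \<pi> VF EF | VF EF. pcst_feasible V E r VF EF}"

definition kpcst_opt :: "'a set \<Rightarrow> 'a set set \<Rightarrow> 'a \<Rightarrow> nat \<Rightarrow> ('a set \<Rightarrow> real) \<Rightarrow> ('a \<Rightarrow> real) \<Rightarrow> real" where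
  "kpcst_opt V E r k c \<pi> = Inf {pcst_cost V c \<pi> VF EF | VF EF. kpcst_feasible V E r k VF EF}"

end

theory Submission
  imports Defs
begin

text \<open>A tree with at least k vertices is in particular a PCST solution, so the PCST optimum
  is a lower bound for the k-PCST optimum; a 2-approximate PCST tree that already has k
  vertices is therefore 2-approximate for k-PCST as well.\<close>

lemma kpcst_feasible_imp_pcst_feasible:
  "kpcst_feasible V E r k VF EF \<Longrightarrow> pcst_feasible V E r VF EF"
  by (simp add: kpcst_feasible_def pcst_feasible_def)

lemma pcst_feasible_card_imp_kpcst_feasible:
  "pcst_feasible V E r VF EF \<Longrightarrow> card VF \<ge> k \<Longrightarrow> kpcst_feasible V E r k VF EF"
  by (simp add: kpcst_feasible_def pcst_feasible_def)

lemma pcst_cost_nonneg: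
  assumes "\<forall>e\<in>E. c e \<ge> 0" and "\<forall>v\<in>V. \<pi> v \<ge> 0" and "pcst_feasible V E r VF EF"
  shows "pcst_cost V c \<pi> VF EF \<ge> 0"
proof -
  have "EF \<subseteq> E" using assms(3) by (simp add: pcst_feasible_def subtree_def)
  then have "(\<Sum>e\<in>EF. c e) \<ge> 0" using assms(1) by (intro sum_nonneg) auto
  moreover have "(\<Sum>v\<in>V - VF. \<pi> v) \<ge> 0" using assms(2) by (intro sum_nonneg) auto
  ultimately show ?thesis by (simp add: pcst_cost_def)
qed

text \<open>Nonnegativity makes the PCST costs bounded below, and the given k-PCST solution keeps
  the k-PCST infimum from being the junk value Inf of the empty set.\<close>
lemma pcst_opt_le_kpcst_opt:
  assumes "\<forall>e\<in>E. c e \<ge> 0" and "\<forall>v\<in>V. \<pi> v \<ge> 0" and "kpcst_feasible V E r k VF EF"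
  shows "pcst_opt V E r c \<pi> \<le> kpcst_opt V E r k c \<pi>"
proof -
  let ?pcst = "{pcst_cost V c \<pi> VF EF | VF EF. pcst_feasible V E r VF EF}"
  let ?kpcst = "{pcst_cost V c \<pi> VF EF | VF EF. kpcst_feasible V E r k VF EF}"
  have "?kpcst \<subseteq> ?pcst" by (auto dest: kpcst_feasible_imp_pcst_feasible)
  moreover have "?kpcst \<noteq> {}" using assms(3) by blast
  moreover have "bdd_below ?pcst"
    using pcst_cost_nonneg[OF assms(1,2)] by (intro bdd_belowI[where m = 0]) blast
  ultimately have "Inf ?pcst \<le> Inf ?kpcst" by (intro cInf_superset_mono)
  then show ?thesis by (simp add: pcst_opt_def kpcst_opt_def)
qed

theorem lemma3:
  fixes V :: "'a set" and E :: "'a set set" and r :: 'a and k :: nat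
    and c :: "'a set \<Rightarrow> real" and \<pi> :: "'a \<Rightarrow> real"
    and V_PCST :: "'a set" and E_PCST :: "'a set set"
  assumes G: "graph V E" and conn: "connected_graph V E" and root: "r \<in> V"
    and c_nonneg: "\<forall>e\<in>E. c e \<ge> 0" and pi_nonneg: "\<forall>v\<in>V. \<pi> v \<ge> 0"
    and proc1_tree: "pcst_feasible V E r V_PCST E_PCST"
    and proc1_approx: "pcst_cost V c \<pi> V_PCST E_PCST \<le> 2 * pcst_opt V E r c \<pi>"
    and step1: "card V_PCST \<ge> k"
  shows "kpcst_feasible V E r k V_PCST E_PCST
       \<and> pcst_cost V c \<pi> V_PCST E_PCST \<le> 2 * kpcst_opt V E r k c \<pi>"
proof -
  have feasible: "kpcst_feasible V E r k V_PCST E_PCST"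
    using proc1_tree step1 by (rule pcst_feasible_card_imp_kpcst_feasible)
  moreover have "pcst_opt V E r c \<pi> \<le> kpcst_opt V E r k c \<pi>"
    using c_nonneg pi_nonneg feasible by (rule pcst_opt_le_kpcst_opt)
  ultimately show ?thesis using proc1_approx by linarith
qed

end
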